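(* Let $T>0$ and let $G:\mathbb{R}\leadsto\mathbb{R}$ be a Lipschitz continuous set-valued map with nonempty, convex, closed values. Let $U,W:[0,T]\times\mathbb{R}\to\mathbb{R}$ be continuous functions such that: (U1) for every $x\in\mathrm{Sol}(G)$ and all $t_1<t_2$ in $[0,T]$, $U(t_1,x(t_1))\geqslant U(t_2,x(t_2))$; (U2) for every $(t_0,x_0)\in[0,T]\times\mathbb{R}$ there is $\bar x\in\mathrm{Sol}_G(t_0,x_0)$ with $U(t,\bar x(t))=U(t_0,x_0)$ for all $t\in[0,t_0]$; (W1) for every $x\in\mathrm{Sol}(G)$ and all $t_1<t_2$ in $[0,T]$, $W(t_1,x(t_1))\geqslant W(t_2,x(t_2))$; (W2) for every $(t_0,x_0)\in[0,T]\times\mathbb{R}$ there is $\tilde x\in\mathrm{Sol}_G(t_0,x_0)$ with $W(t_0,x_0)=W(t,\tilde x(t))$ for all $t\in[t_0,T]$. If $U(0,\cdot)=W(0,\cdot)$ and $U(T,\cdot)=W(T,\cdot)$, then $U=W$ on $[0,T]\times\mathbb{R}$.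
   Context: $\mathrm{Sol}(G)$ is the set of absolutely continuous $x:[0,T]\to\mathbb{R}$ with $\dot x(t)\in G(x(t))$ for a.e. $t\in[0,T]$, and $\mathrm{Sol}_G(t_0,x_0)$ is the subset of those with $x(t_0)=x_0$. *)

theory Defs
  imports "HOL-Analysis.Analysis"
begin

definition abs_continuous_on :: "real \<Rightarrow> real \<Rightarrow> (real \<Rightarrow> real) \<Rightarrow> bool" where
  "abs_continuous_on a b x \<longleftrightarrow>
     (\<forall>\<epsilon>>0. \<exists>\<delta>>0. \<forall>(n::nat) (p::nat \<Rightarrow> real) (q::nat \<Rightarrow> real).
        (\<forall>i<n. a \<le> p i \<and> p i \<le> q i \<and> q i \<le> b) \<and>
        (\<forall>i j. i < j \<and> j < n \<longrightarrow> q i \<le> p j) \<and>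
        (\<Sum>i<n. q i - p i) < \<delta>
        \<longrightarrow> (\<Sum>i<n. \<bar>x (q i) - x (p i)\<bar>) < \<epsilon>)"

definition lipschitz_setvalued :: "(real \<Rightarrow> real set) \<Rightarrow> bool" where
  "lipschitz_setvalued G \<longleftrightarrow>
     (\<exists>L\<ge>0. \<forall>x y. \<forall>u\<in>G x. \<exists>v\<in>G y. \<bar>u - v\<bar> \<le> L * \<bar>x - y\<bar>)"

definition Sol :: "real \<Rightarrow> (real \<Rightarrow> real set) \<Rightarrow> (real \<Rightarrow> real) set" where
  "Sol T G = {x. abs_continuous_on 0 T x \<and>
     (AE t in lebesgue. t \<in> {0..T} \<longrightarrow>
        (\<exists>d. (x has_real_derivative d) (at t within {0..T}) \<and> d \<in> G (x t)))}"

definition Sol_at :: "real \<Rightarrow> (real \<Rightarrow> real set) \<Rightarrow> real \<Rightarrow> real \<Rightarrow> (real \<Rightarrow> real) set" where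
  "Sol_at T G t0 x0 = {x \<in> Sol T G. x t0 = x0}"

end

theory Submission
  imports Defs
begin

text \<open>First, \<open>W \<le> U\<close>: follow a trajectory on which \<open>U\<close> is constant back to time \<open>0\<close>,
  where \<open>U = W\<close>, and use that \<open>W\<close> does not increase forward in time.  Hence a forward
  \<open>W\<close>-level trajectory starting at time \<open>0\<close> is a level curve of \<open>U\<close> as well.
  Suppose now \<open>d = U(t\<^sub>0, x\<^sub>0) \<noteq> W(t\<^sub>0, x\<^sub>0) = c\<close>.  Joining a backward \<open>U\<close>-level-\<open>d\<close>
  trajectory with a forward \<open>W\<close>-level-\<open>c\<close> trajectory through \<open>(t\<^sub>0, x\<^sub>0)\<close> gives a
  curve \<open>y\<close>, and since \<open>U = W\<close> at time \<open>T\<close> there is a \<open>U\<close>-level-\<open>c\<close> trajectory \<open>z\<close>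
  on all of \<open>[0, T]\<close> ending at \<open>y(T)\<close>.  By the intermediate value theorem some \<open>v\<close>
  strictly between \<open>z(0)\<close> and \<open>y(0)\<close> has \<open>U(0, v) = (c + d) / 2\<close>, and the common level
  trajectory \<open>g\<close> from \<open>(0, v)\<close> never meets \<open>y\<close> or \<open>z\<close>.  So \<open>g\<close> stays strictly
  between them, contradicting \<open>y(T) = z(T)\<close>.\<close>

lemma abs_continuous_on_imp_continuous_on:
  assumes "abs_continuous_on a b x"
  shows "continuous_on {a..b} x"
  unfolding continuous_on_iff
proof (intro ballI allI impI)
  fix s \<epsilon> :: real
  assume s: "s \<in> {a..b}" and "0 < \<epsilon>"
  obtain \<delta> where "\<delta> > 0" and small_var: "\<forall>(n::nat) p q.
      (\<forall>i<n. a \<le> p i \<and> p i \<le> q i \<and> q i \<le> b) \<and> (\<forall>i j. i < j \<and> j < n \<longrightarrow> q i \<le> p j) \<and>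
      (\<Sum>i<n. q i - p i) < \<delta> \<longrightarrow> (\<Sum>i<n. \<bar>x (q i) - x (p i)\<bar>) < \<epsilon>"
    using assms \<open>0 < \<epsilon>\<close> unfolding abs_continuous_on_def by blast
  show "\<exists>\<delta>>0. \<forall>s'\<in>{a..b}. dist s' s < \<delta> \<longrightarrow> dist (x s') (x s) < \<epsilon>"
  proof (intro exI conjI ballI impI)
    fix s' assume "s' \<in> {a..b}" and "dist s' s < \<delta>"
    then have "max s' s - min s' s < \<delta>"
      by (auto simp: dist_real_def)
    with s \<open>s' \<in> {a..b}\<close> have "\<bar>x (max s' s) - x (min s' s)\<bar> < \<epsilon>"
      using small_var[rule_format, of 1 "\<lambda>_. min s' s" "\<lambda>_. max s' s"] by auto
    then show "dist (x s') (x s) < \<epsilon>"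
      by (cases "s' \<le> s") (auto simp: dist_real_def max_def min_def abs_minus_commute)
  qed fact
qed

lemma Sol_continuous_on: "x \<in> Sol T G \<Longrightarrow> continuous_on {0..T} x"
  unfolding Sol_def by (auto intro: abs_continuous_on_imp_continuous_on)

lemma continuous_on_never_equal_less_iff:
  fixes f g :: "real \<Rightarrow> real"
  assumes "a \<le> b" "continuous_on {a..b} f" "continuous_on {a..b} g"
    and never_equal: "\<And>s. s \<in> {a..b} \<Longrightarrow> f s \<noteq> g s"
  shows "f a < g a \<longleftrightarrow> f b < g b"
proof -
  define h where "h s = g s - f s" for s
  have cont: "continuous_on {a..b} h"
    unfolding h_def using assms(2,3) by (intro continuous_intros)
  have nonzero: "h s \<noteq> 0" if "s \<in> {a..b}" for s
    using never_equal[OF that] by (simp add: h_def)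
  have "0 < h a \<longleftrightarrow> 0 < h b"
  proof
    assume "0 < h a"
    show "0 < h b"
    proof (rule ccontr)
      assume "\<not> 0 < h b"
      then obtain s where "a \<le> s" "s \<le> b" "h s = 0"
        using IVT2'[OF _ _ \<open>a \<le> b\<close> cont, of 0] \<open>0 < h a\<close> by auto
      with nonzero show False by auto
    qed
  next
    assume "0 < h b"
    show "0 < h a"
    proof (rule ccontr)
      assume "\<not> 0 < h a"
      then obtain s where "a \<le> s" "s \<le> b" "h s = 0"
        using IVT'[OF _ _ \<open>a \<le> b\<close> cont, of 0] \<open>0 < h b\<close> by auto
      with nonzero show False by auto
    qed
  qed
  then show ?thesis
    by (simp add: h_def)
qed

locale value_function_pair =
  fixes T :: real and S :: "(real \<Rightarrow> real) set" and U W :: "real \<Rightarrow> real \<Rightarrow> real"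
  assumes T_nonneg: "0 \<le> T"
    and trajectory_continuous: "\<And>x. x \<in> S \<Longrightarrow> continuous_on {0..T} x"
    and U0_continuous: "continuous_on UNIV (U 0)"
    and U_nonincreasing: "\<And>x t1 t2. x \<in> S \<Longrightarrow> t1 \<in> {0..T} \<Longrightarrow> t2 \<in> {0..T} \<Longrightarrow> t1 < t2 \<Longrightarrow>
      U t2 (x t2) \<le> U t1 (x t1)"
    and U_backward_level: "\<And>t0 x0. t0 \<in> {0..T} \<Longrightarrow>
      \<exists>x\<in>S. x t0 = x0 \<and> (\<forall>t\<in>{0..t0}. U t (x t) = U t0 x0)"
    and W_nonincreasing: "\<And>x t1 t2. x \<in> S \<Longrightarrow> t1 \<in> {0..T} \<Longrightarrow> t2 \<in> {0..T} \<Longrightarrow> t1 < t2 \<Longrightarrow>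
      W t2 (x t2) \<le> W t1 (x t1)"
    and W_forward_level: "\<And>t0 x0. t0 \<in> {0..T} \<Longrightarrow>
      \<exists>x\<in>S. x t0 = x0 \<and> (\<forall>t\<in>{t0..T}. W t (x t) = W t0 x0)"
    and U_W_initial: "\<And>x. U 0 x = W 0 x"
    and U_W_final: "\<And>x. U T x = W T x"
begin

lemma W_le_U:
  assumes "t \<in> {0..T}"
  shows "W t x \<le> U t x"
proof (cases "t = 0")
  case True
  then show ?thesis by (simp add: U_W_initial)
next
  case False
  obtain y where "y \<in> S" "y t = x" and level: "\<forall>s\<in>{0..t}. U s (y s) = U t x"
    using U_backward_level[OF assms] by blast
  from \<open>y t = x\<close> have "W t x = W t (y t)"
    by simp
  also have "\<dots> \<le> W 0 (y 0)"
    using W_nonincreasing[OF \<open>y \<in> S\<close>, of 0 t] assms False by simp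
  also have "\<dots> = U 0 (y 0)"
    by (rule U_W_initial[symmetric])
  also have "\<dots> = U t x"
    using level assms by simp
  finally show ?thesis .
qed

lemma common_level_trajectory:
  obtains g where "g \<in> S" "g 0 = v" "\<And>s. s \<in> {0..T} \<Longrightarrow> U s (g s) = U 0 v"
    "\<And>s. s \<in> {0..T} \<Longrightarrow> W s (g s) = U 0 v"
proof -
  obtain g where g: "g \<in> S" "g 0 = v" and W_level: "\<forall>s\<in>{0..T}. W s (g s) = U 0 v"
    using W_forward_level[of 0 v] T_nonneg by (auto simp: U_W_initial)
  have "U s (g s) = U 0 v" if s: "s \<in> {0..T}" for s
  proof (rule antisym)
    show "U s (g s) \<le> U 0 v"
      using U_nonincreasing[OF g(1), of 0 s] s g(2) by (cases "s = 0") auto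
    show "U 0 v \<le> U s (g s)"
      using W_le_U[OF s, of "g s"] W_level s by simp
  qed
  with g W_level that show ?thesis by blast
qed

lemma common_level_trajectory_between:
  assumes "U 0 a \<noteq> U 0 b"
  obtains g where "g \<in> S" "(a < g 0) \<noteq> (b < g 0)"
    "\<And>s. s \<in> {0..T} \<Longrightarrow> U s (g s) = (U 0 a + U 0 b) / 2"
    "\<And>s. s \<in> {0..T} \<Longrightarrow> W s (g s) = (U 0 a + U 0 b) / 2"
proof -
  define e where "e = (U 0 a + U 0 b) / 2"
  have "e \<in> closed_segment (U 0 a) (U 0 b)"
    by (auto simp: closed_segment_eq_real_ivl e_def)
  then obtain v where v: "v \<in> closed_segment a b" "U 0 v = e"
    using IVT'_closed_segment_real continuous_on_subset[OF U0_continuous] by blast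
  moreover have "v \<noteq> a" "v \<noteq> b"
    using v(2) assms by (auto simp: e_def)
  ultimately have "(a < v) \<noteq> (b < v)"
    by (auto simp: closed_segment_eq_real_ivl split: if_splits)
  moreover obtain g where "g \<in> S" "g 0 = v" "\<And>s. s \<in> {0..T} \<Longrightarrow> U s (g s) = U 0 v"
    "\<And>s. s \<in> {0..T} \<Longrightarrow> W s (g s) = U 0 v"
    using common_level_trajectory[where v = v] by blast
  ultimately show ?thesis
    using that[of g] v(2) unfolding e_def by simp
qed

lemma trajectories_never_meeting_keep_order:
  assumes "x \<in> S" "y \<in> S" "0 \<le> t1" "t1 \<le> t2" "t2 \<le> T"
    and "\<And>s. s \<in> {t1..t2} \<Longrightarrow> x s \<noteq> y s"
  shows "x t1 < y t1 \<longleftrightarrow> x t2 < y t2"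
proof -
  have "{t1..t2} \<subseteq> {0..T}"
    using assms(3,5) by auto
  then have "continuous_on {t1..t2} x" "continuous_on {t1..t2} y"
    using continuous_on_subset trajectory_continuous assms(1,2) by blast+
  then show ?thesis
    by (rule continuous_on_never_equal_less_iff[OF \<open>t1 \<le> t2\<close> _ _ assms(6)])
qed

theorem U_eq_W:
  assumes t0: "t0 \<in> {0..T}"
  shows "U t0 x0 = W t0 x0"
proof (rule ccontr)
  assume ne: "U t0 x0 \<noteq> W t0 x0"
  have T: "T \<in> {0..T}" and t0_le: "0 \<le> t0" "t0 \<le> T"
    using t0 T_nonneg by auto
  obtain y\<^sub>1 where "y\<^sub>1 \<in> S" "y\<^sub>1 t0 = x0" and y\<^sub>1: "\<forall>s\<in>{0..t0}. U s (y\<^sub>1 s) = U t0 x0"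
    using U_backward_level[OF t0] by blast
  obtain y\<^sub>2 where "y\<^sub>2 \<in> S" "y\<^sub>2 t0 = x0" and y\<^sub>2: "\<forall>s\<in>{t0..T}. W s (y\<^sub>2 s) = W t0 x0"
    using W_forward_level[OF t0] by blast
  obtain z where "z \<in> S" "z T = y\<^sub>2 T" and z: "\<forall>s\<in>{0..T}. U s (z s) = W t0 x0"
    using U_backward_level[OF T, of "y\<^sub>2 T"] y\<^sub>2 t0 by (auto simp: U_W_final)
  have levels: "U 0 (z 0) = W t0 x0" "U 0 (y\<^sub>1 0) = U t0 x0"
    using y\<^sub>1 z t0_le by auto
  with ne have distinct: "U 0 (z 0) \<noteq> U 0 (y\<^sub>1 0)"
    by simp
  define e where "e = (U 0 (z 0) + U 0 (y\<^sub>1 0)) / 2"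
  have e_ne: "e \<noteq> U t0 x0" "e \<noteq> W t0 x0"
    using ne by (auto simp: e_def levels)
  obtain g where "g \<in> S" and between: "(z 0 < g 0) \<noteq> (y\<^sub>1 0 < g 0)"
    and g_U: "\<And>s. s \<in> {0..T} \<Longrightarrow> U s (g s) = e"
    and g_W: "\<And>s. s \<in> {0..T} \<Longrightarrow> W s (g s) = e"
    using common_level_trajectory_between[OF distinct] unfolding e_def by blast
  have g_z: "z s \<noteq> g s" if "s \<in> {0..T}" for s
    using z[rule_format, OF that] g_U[OF that] e_ne by auto
  have g_y\<^sub>1: "y\<^sub>1 s \<noteq> g s" if "s \<in> {0..t0}" for s
    using y\<^sub>1[rule_format, OF that] g_U[of s] that t0 e_ne by auto
  have g_y\<^sub>2: "y\<^sub>2 s \<noteq> g s" if "s \<in> {t0..T}" for s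
    using y\<^sub>2[rule_format, OF that] g_W[of s] that t0 e_ne by auto
  have "z 0 < g 0 \<longleftrightarrow> z T < g T"
    by (rule trajectories_never_meeting_keep_order[OF \<open>z \<in> S\<close> \<open>g \<in> S\<close> order_refl T_nonneg order_refl g_z])
  also have "\<dots> \<longleftrightarrow> y\<^sub>2 t0 < g t0"
    using trajectories_never_meeting_keep_order[OF \<open>y\<^sub>2 \<in> S\<close> \<open>g \<in> S\<close> t0_le order_refl g_y\<^sub>2]
      \<open>z T = y\<^sub>2 T\<close> by simp
  also have "\<dots> \<longleftrightarrow> y\<^sub>1 0 < g 0"
    using trajectories_never_meeting_keep_order[OF \<open>y\<^sub>1 \<in> S\<close> \<open>g \<in> S\<close> order_refl t0_le g_y\<^sub>1]
      \<open>y\<^sub>1 t0 = x0\<close> \<open>y\<^sub>2 t0 = x0\<close> by simp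
  finally show False
    using between by simp
qed

end

theorem theorem5p4:
  fixes T :: real and G :: "real \<Rightarrow> real set" and U W :: "real \<Rightarrow> real \<Rightarrow> real"
  assumes T_pos: "T > 0"
    and G_lip: "lipschitz_setvalued G"
    and G_ne: "\<And>x. G x \<noteq> {}"
    and G_convex: "\<And>x. convex (G x)"
    and G_closed: "\<And>x. closed (G x)"
    and U_cont: "continuous_on ({0..T} \<times> UNIV) (\<lambda>(t, x). U t x)"
    and W_cont: "continuous_on ({0..T} \<times> UNIV) (\<lambda>(t, x). W t x)"
    and U1: "\<And>x t1 t2. x \<in> Sol T G \<Longrightarrow> t1 \<in> {0..T} \<Longrightarrow> t2 \<in> {0..T} \<Longrightarrow> t1 < t2 \<Longrightarrow>
               U t1 (x t1) \<ge> U t2 (x t2)"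
    and U2: "\<And>t0 x0. t0 \<in> {0..T} \<Longrightarrow>
               \<exists>xb \<in> Sol_at T G t0 x0. \<forall>t \<in> {0..t0}. U t (xb t) = U t0 x0"
    and W1: "\<And>x t1 t2. x \<in> Sol T G \<Longrightarrow> t1 \<in> {0..T} \<Longrightarrow> t2 \<in> {0..T} \<Longrightarrow> t1 < t2 \<Longrightarrow>
               W t1 (x t1) \<ge> W t2 (x t2)"
    and W2: "\<And>t0 x0. t0 \<in> {0..T} \<Longrightarrow>
               \<exists>xt \<in> Sol_at T G t0 x0. \<forall>t \<in> {t0..T}. W t0 x0 = W t (xt t)"
    and init: "\<And>x. U 0 x = W 0 x"
    and final: "\<And>x. U T x = W T x"
  shows "\<forall>t \<in> {0..T}. \<forall>x. U t x = W t x"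
proof -
  have "continuous_on UNIV ((\<lambda>(t, x). U t x) \<circ> Pair 0)"
    using T_pos by (intro continuous_on_compose continuous_intros continuous_on_subset[OF U_cont]) auto
  then have U0_cont: "continuous_on UNIV (U 0)"
    by (simp add: comp_def)
  interpret value_function_pair T "Sol T G" U W
  proof unfold_locales
    show "\<exists>x\<in>Sol T G. x t0 = x0 \<and> (\<forall>t\<in>{0..t0}. U t (x t) = U t0 x0)"
      if "t0 \<in> {0..T}" for t0 x0
      using U2[OF that, of x0] by (auto simp: Sol_at_def)
    show "\<exists>x\<in>Sol T G. x t0 = x0 \<and> (\<forall>t\<in>{t0..T}. W t (x t) = W t0 x0)"
      if "t0 \<in> {0..T}" for t0 x0
      using W2[OF that, of x0] by (auto simp: Sol_at_def)
  qed (use T_pos U0_cont U1 W1 init final Sol_continuous_on in auto)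
  show ?thesis
    using U_eq_W by blast
qed

end
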